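(* Let $P(z) \in \mathbb{C}[z, z^{-1}]$ be a Laurent polynomial and let $A \subseteq [0,1]$ be a closed set such that $P(e^{2\pi i t}) \neq 0$ for all $t \in A$. Then \[ \lim_{k\to\infty} \frac{1}{k!} \int_A \log^k \left|P\left(e^{2\pi i t}\right)\right| \, dt = 0. \]
   Context: $\log^k x$ means $(\log x)^k$; the integral is with respect to Lebesgue measure. *)

theory Defs
  imports "HOL-Analysis.Analysis" "HOL-Computational_Algebra.Polynomial"
begin

text \<open>A Laurent polynomial P in C[z, z^-1] is represented as P(z) = z^(-m) * Q(z)
  with Q a complex polynomial and m a natural number; every Laurent polynomial
  has such a representation.\<close>
definition laurent_eval :: "nat \<Rightarrow> complex poly \<Rightarrow> complex \<Rightarrow> complex" where
  "laurent_eval m Q z = poly Q z / z ^ m"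

end

theory Submission
  imports Defs
begin

text \<open>On a compact set a continuous function f is bounded, say by B, so the k-th moment
  of f is at most B^k times the measure of the set; and B^k / k! tends to 0 since these
  are the terms of the exponential series.\<close>

lemma abs_set_integral_power_le:
  fixes f :: "'a::euclidean_space \<Rightarrow> real"
  assumes "compact A" "continuous_on A f" "\<And>x. x \<in> A \<Longrightarrow> \<bar>f x\<bar> \<le> B"
  shows "\<bar>LINT x:A|lborel. f x ^ k\<bar> \<le> B ^ k * measure lborel A"
proof -
  have A_sets: "A \<in> sets lborel"
    using assms(1) by (simp add: borel_compact)
  have A_finite: "emeasure lborel A \<noteq> \<infinity>"
    using emeasure_compact_finite[OF assms(1)] by simp
  have "set_integrable lborel A (\<lambda>x. f x ^ k)"
    unfolding set_integrable_def
    using assms(1,2) by (intro borel_integrable_compact continuous_intros)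
  then have "\<bar>LINT x:A|lborel. f x ^ k\<bar> \<le> (LINT x:A|lborel. \<bar>f x\<bar> ^ k)"
    using set_integral_norm_bound[of lborel A "\<lambda>x. f x ^ k"] by (simp add: power_abs)
  also have "\<dots> \<le> (LINT x:A|lborel. B ^ k)"
  proof (rule set_integral_mono)
    show "set_integrable lborel A (\<lambda>x. \<bar>f x\<bar> ^ k)"
      unfolding set_integrable_def
      using assms(1,2) by (intro borel_integrable_compact continuous_intros)
    show "set_integrable lborel A (\<lambda>x. B ^ k)"
      unfolding set_integrable_def
      using assms(1) by (intro borel_integrable_compact continuous_intros)
    show "\<bar>f x\<bar> ^ k \<le> B ^ k" if "x \<in> A" for x
      using assms(3)[OF that] by (intro power_mono) auto
  qed
  also have "\<dots> = B ^ k * measure lborel A"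
    using set_integral_const[OF A_sets A_finite, of "B ^ k"] by (simp add: mult.commute)
  finally show ?thesis .
qed

lemma set_integral_power_div_fact_tendsto_zero:
  fixes f :: "'a::euclidean_space \<Rightarrow> real"
  assumes "compact A" "continuous_on A f"
  shows "(\<lambda>k. (LINT x:A|lborel. f x ^ k) / fact k) \<longlonglongrightarrow> 0"
proof -
  obtain B where B: "\<And>x. x \<in> A \<Longrightarrow> \<bar>f x\<bar> \<le> B"
    using compact_imp_bounded[OF compact_continuous_image[OF assms(2,1)]]
    unfolding bounded_iff by auto
  have "(\<lambda>k. B ^ k / fact k) \<longlonglongrightarrow> 0"
    using summable_LIMSEQ_zero[OF summable_exp[of B]] by (simp add: inverse_eq_divide)
  then have "(\<lambda>k. measure lborel A * (B ^ k / fact k)) \<longlonglongrightarrow> 0"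
    by (rule tendsto_mult_right_zero)
  then show ?thesis
  proof (rule Lim_null_comparison[rotated], intro always_eventually allI)
    fix k
    have "norm ((LINT x:A|lborel. f x ^ k) / fact k) \<le> B ^ k * measure lborel A / fact k"
      using abs_set_integral_power_le[OF assms B] by (simp add: divide_right_mono)
    then show "norm ((LINT x:A|lborel. f x ^ k) / fact k) \<le> measure lborel A * (B ^ k / fact k)"
      by (simp add: field_simps)
  qed
qed

theorem lemma1:
  fixes m :: nat and Q :: "complex poly" and A :: "real set"
  assumes "closed A" and "A \<subseteq> {0..1}"
    and "\<forall>t\<in>A. laurent_eval m Q (exp (2 * pi * \<i> * complex_of_real t)) \<noteq> 0"
  shows "(\<lambda>k. (1 / fact k) * (LINT t:A|lborel.
            (ln (cmod (laurent_eval m Q (exp (2 * pi * \<i> * complex_of_real t))))) ^ k))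
         \<longlonglongrightarrow> 0"
proof -
  have "compact A"
    using assms(1,2) by (meson compact_Icc compact_imp_bounded bounded_subset compact_eq_bounded_closed)
  moreover have "continuous_on A
      (\<lambda>t. ln (cmod (laurent_eval m Q (exp (2 * pi * \<i> * complex_of_real t)))))"
    using assms(3) unfolding laurent_eval_def by (auto intro!: continuous_intros)
  ultimately show ?thesis
    using set_integral_power_div_fact_tendsto_zero by simp
qed

end
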